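(* Let $\mu$ be a Borel probability measure on $\mathbb{R}$ with compact support such that ${\rm supp}(\mu)$ has a finite number $n$ of connected components. Then for every $\varepsilon>0$ there exist real-valued $x,y\in L^\infty(0,1)$ (with respect to Lebesgue measure on $(0,1)$) such that: (1) $\|x-y\|_\infty<\varepsilon$; (2) the distribution of $x$ is $\mu$; (3) the distribution $\nu$ of $y$ is supported on a union of $n$ pairwise disjoint intervals $[a_j,b_j]$, $j=1,\dots,n$, $\nu$ is absolutely continuous, and its density $\rho$ satisfies \[c_j\sqrt{(t-a_j)(b_j-t)}\le\rho(t)\le C_j\sqrt{(t-a_j)(b_j-t)},\quad t\in[a_j,b_j],\] for some constants $c_j,C_j>0$.
   Context: The distribution of a measurable function $f$ on $(0,1)$ is the pushforward of Lebesgue measure on $(0,1)$ under $f$. *)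

theory Defs
  imports "HOL-Probability.Probability"
begin

definition measure_support :: "'a::topological_space measure \<Rightarrow> 'a set" where
  "measure_support M = {t. \<forall>U. open U \<longrightarrow> t \<in> U \<longrightarrow> emeasure M U > 0}"

definition Linfty01 :: "(real \<Rightarrow> real) set" where
  "Linfty01 = {f. f \<in> borel_measurable (lebesgue_on {0<..<1}) \<and>
                  (\<exists>B. AE t in lebesgue_on {0<..<1}. \<bar>f t\<bar> \<le> B)}"

end

theory Submission
  imports Defs
begin

text \<open>Couple mu and nu to Lebesgue measure on (0,1) through their quantile functions: if the
  distribution functions are e-close in the sense of the Levy metric, then the quantile functions
  are uniformly e-close on (0,1). So it suffices to find nu with the required density that is
  Levy-close to mu. The support of mu consists of finitely many disjoint compact intervals
  [alpha, beta] (possibly points) with positive gaps between them. Cover each of them by a grid of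
  small mesh h on a slightly larger interval [a, b] and give each cell its mu-mass, spread
  proportionally to sqrt((t - a)(b - t)). Every cell has positive mass, so the density is comparable
  to sqrt((t - a)(b - t)); and the distribution function agrees with that of mu at the grid points,
  so the two are Levy-close at scale h.\<close>

section \<open>Support of a Borel measure\<close>

lemma closed_measure_support: "closed (measure_support M)"
proof -
  have "- measure_support M = \<Union>{U. open U \<and> emeasure M U = 0}"
    by (auto simp: measure_support_def)
  then show ?thesis
    by (metis (mono_tags) closed_def mem_Collect_eq open_Union)
qed

lemma emeasure_compl_measure_support:
  fixes M :: "'a::second_countable_topology measure"
  assumes sets_M: "sets M = sets borel"
  shows "emeasure M (- measure_support M) = 0"
proof -
  let ?F = "{U. open U \<and> emeasure M U = 0}"
  obtain F where F: "F \<subseteq> ?F" "countable F" "\<Union>F = \<Union>?F"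
    using Lindelof[of ?F] by auto
  have "- measure_support M = (\<Union>U\<in>F. U)"
    using F(3) by (auto simp: measure_support_def)
  also have "\<dots> \<in> null_sets M"
    using F(1,2) sets_M by (intro null_sets_UN') (auto simp: null_sets_def)
  finally show ?thesis by auto
qed

lemma emeasure_Int_measure_support:
  fixes M :: "'a::second_countable_topology measure"
  assumes "sets M = sets borel" "A \<in> sets M"
  shows "emeasure M (A \<inter> measure_support M) = emeasure M A"
proof -
  have null: "- measure_support M \<in> null_sets M"
    using emeasure_compl_measure_support[OF assms(1)] closed_measure_support[of M]
    by (simp add: null_sets_def assms(1) closed_def borel_open)
  have "A \<inter> measure_support M = A - (- measure_support M)"
    by auto
  then show ?thesis
    using emeasure_Diff_null_set[OF null assms(2)] by simp
qed

lemma emeasure_disjoint_measure_support: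
  fixes M :: "'a::second_countable_topology measure"
  assumes "sets M = sets borel" "A \<in> sets M" "A \<inter> measure_support M = {}"
  shows "emeasure M A = 0"
  using emeasure_Int_measure_support[OF assms(1,2)] assms(3) by simp

lemma component_compact_real_eq_interval:
  fixes S :: "real set"
  assumes "compact S" "C \<in> components S"
  obtains \<alpha> \<beta> where "\<alpha> \<le> \<beta>" "C = {\<alpha>..\<beta>}"
proof -
  have "connected C" "compact C"
    using assms in_components_connected compact_components by auto
  then obtain \<alpha> \<beta> where "C = {\<alpha>..\<beta>}"
    using connected_compact_interval_1 by blast
  moreover have "C \<noteq> {}"
    using assms(2) in_components_nonempty by auto
  ultimately show ?thesis
    using that by auto
qed

lemma components_separated:
  fixes S :: "'a::heine_borel set"
  assumes "compact S" "finite (components S)"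
  obtains d where "0 < d"
    "\<And>C D x y. C \<in> components S \<Longrightarrow> D \<in> components S \<Longrightarrow> C \<noteq> D \<Longrightarrow> x \<in> C \<Longrightarrow> y \<in> D
      \<Longrightarrow> d \<le> dist x y"
proof -
  have "\<exists>d>0. \<forall>x\<in>C. \<forall>y\<in>\<Union>(components S - {C}). d \<le> dist x y" if C: "C \<in> components S" for C
  proof (rule separate_compact_closed)
    show "compact C"
      using assms(1) C compact_components by blast
    show "closed (\<Union>(components S - {C}))"
      using assms compact_imp_closed closed_components by blast
    show "C \<inter> \<Union>(components S - {C}) = {}"
      using C components_nonoverlap by blast
  qed
  then obtain f where f: "\<And>C. C \<in> components S \<Longrightarrow>
      0 < f C \<and> (\<forall>x\<in>C. \<forall>y\<in>\<Union>(components S - {C}). f C \<le> dist x y)"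
    by metis
  show ?thesis
  proof (rule that)
    show "0 < Min (insert 1 (f ` components S))"
      using assms(2) f by simp
    fix C D x y
    assume "C \<in> components S" "D \<in> components S" "C \<noteq> D" "x \<in> C" "y \<in> D"
    then have "Min (insert 1 (f ` components S)) \<le> f C" "f C \<le> dist x y"
      using assms(2) f by auto
    then show "Min (insert 1 (f ` components S)) \<le> dist x y"
      by linarith
  qed
qed

lemma component_subset_measure_support_restrict:
  fixes M :: "'a::second_countable_topology measure"
  assumes sets_M: "sets M = sets borel" and finite: "finite (components (measure_support M))"
    and C: "C \<in> components (measure_support M)"
  shows "C \<subseteq> measure_support (density M (indicator C))"
proof
  fix t assume "t \<in> C"
  define T where "T = \<Union>(components (measure_support M) - {C})"
  have "closed C" "closed T"
    using finite C closed_measure_support closed_components by (auto simp: T_def)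
  have "t \<notin> T"
    using \<open>t \<in> C\<close> C components_nonoverlap by (fastforce simp: T_def)
  have "measure_support M - T \<subseteq> C"
  proof
    fix x assume x: "x \<in> measure_support M - T"
    then obtain X where "X \<in> components (measure_support M)" "x \<in> X"
      using Union_components[of "measure_support M"] by blast
    with x show "x \<in> C"
      by (auto simp: T_def)
  qed
  show "t \<in> measure_support (density M (indicator C))"
    unfolding measure_support_def
  proof (intro CollectI allI impI)
    fix U assume U: "open U" "t \<in> U"
    have "t \<in> measure_support M"
      using \<open>t \<in> C\<close> C in_components_subset by blast
    then have "0 < emeasure M (U - T)"
      using U \<open>closed T\<close> \<open>t \<notin> T\<close> by (auto simp: measure_support_def open_Diff)
    also have "\<dots> = emeasure M ((U - T) \<inter> measure_support M)"
      using U \<open>closed T\<close> sets_M by (simp add: emeasure_Int_measure_support)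
    also have "\<dots> \<le> emeasure M (C \<inter> U)"
      using \<open>measure_support M - T \<subseteq> C\<close> U \<open>closed C\<close> sets_M by (intro emeasure_mono) auto
    also have "\<dots> = emeasure (density M (indicator C)) U"
      using U \<open>closed C\<close> sets_M by (simp add: emeasure_restricted)
    finally show "0 < emeasure (density M (indicator C)) U" .
  qed
qed

lemma emeasure_eq_sum_components:
  fixes M :: "'a::second_countable_topology measure"
  assumes sets_M: "sets M = sets borel" and finite: "finite (components (measure_support M))"
    and A: "A \<in> sets M"
  shows "emeasure M A = (\<Sum>C\<in>components (measure_support M). emeasure M (C \<inter> A))"
proof -
  have "emeasure M A = emeasure M (\<Union>C\<in>components (measure_support M). C \<inter> A)"
    using emeasure_Int_measure_support[OF sets_M A] Union_components[of "measure_support M"]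
    by (simp add: Int_commute UN_extend_simps(4))
  also have "\<dots> = (\<Sum>C\<in>components (measure_support M). emeasure M (C \<inter> A))"
  proof (rule sum_emeasure[symmetric, OF _ _ finite])
    have "C \<inter> A \<in> sets M" if "C \<in> components (measure_support M)" for C
      using closed_components[OF closed_measure_support that] A sets_M by (simp add: borel_closed)
    then show "(\<lambda>C. C \<inter> A) ` components (measure_support M) \<subseteq> sets M"
      by auto
    show "disjoint_family_on (\<lambda>C. C \<inter> A) (components (measure_support M))"
      unfolding disjoint_family_on_def using components_nonoverlap by blast
  qed
  finally show ?thesis .
qed

section \<open>Levy closeness\<close>

text \<open>For probability measures this says that the Levy distance of M and N is at most e.\<close>

definition levy_close :: "real measure \<Rightarrow> real measure \<Rightarrow> real \<Rightarrow> bool" where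
  "levy_close M N e \<longleftrightarrow>
     (\<forall>x. emeasure M {..x - e} \<le> emeasure N {..x} \<and> emeasure N {..x} \<le> emeasure M {..x + e})"

lemma levy_close_mono:
  assumes "levy_close M N e" "sets M = sets borel" "e \<le> e'"
  shows "levy_close M N e'"
  unfolding levy_close_def
proof
  fix x
  have "emeasure M {..x - e'} \<le> emeasure M {..x - e}" "emeasure M {..x + e} \<le> emeasure M {..x + e'}"
    using assms(2,3) by (simp_all add: emeasure_mono)
  then show "emeasure M {..x - e'} \<le> emeasure N {..x} \<and> emeasure N {..x} \<le> emeasure M {..x + e'}"
    using assms(1) unfolding levy_close_def by (meson order_trans)
qed

lemma levy_close_sum:
  assumes "\<And>i. i \<in> I \<Longrightarrow> levy_close (M i) (N i) e"
    and "\<And>x. emeasure M' {..x} = (\<Sum>i\<in>I. emeasure (M i) {..x})"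
    and "\<And>x. emeasure N' {..x} = (\<Sum>i\<in>I. emeasure (N i) {..x})"
  shows "levy_close M' N' e"
  using assms unfolding levy_close_def by (auto intro!: sum_mono)

definition grid_cell :: "real \<Rightarrow> real \<Rightarrow> nat \<Rightarrow> real set" where
  "grid_cell a h k = {a + real k * h ..< a + real (Suc k) * h}"

lemma grid_cell_index:
  assumes "0 < h" "a \<le> s" "s < a + real K * h"
  obtains k where "k < K" "s \<in> grid_cell a h k"
proof -
  define k where "k = nat \<lfloor>(s - a) / h\<rfloor>"
  have "real k = of_int \<lfloor>(s - a) / h\<rfloor>"
    using assms by (simp add: k_def)
  then have "real k \<le> (s - a) / h" "(s - a) / h < real k + 1"
    by linarith+
  then have k: "real k * h \<le> s - a" "s - a < (real k + 1) * h"
    using assms(1) by (simp_all add: field_simps)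
  then have "real k * h < real K * h"
    using assms(3) by linarith
  then have "k < K"
    using assms(1) by simp
  moreover have "s \<in> grid_cell a h k"
    using k by (auto simp: grid_cell_def algebra_simps)
  ultimately show ?thesis by (rule that)
qed

lemma levy_close_grid_step:
  fixes M N :: "real measure"
  assumes "sets M = sets borel" "sets N = sets borel" and s: "p \<le> s" "s < p + h"
    and "emeasure N {..<p} = emeasure M {..<p}" "emeasure N {..<p + h} = emeasure M {..<p + h}"
  shows "emeasure M {..s - h} \<le> emeasure N {..s} \<and> emeasure N {..s} \<le> emeasure M {..s + h}"
proof
  have "emeasure M {..s - h} \<le> emeasure M {..<p}"
    using assms(1) s by (intro emeasure_mono) auto
  also have "\<dots> = emeasure N {..<p}"
    using assms(5) by simp
  also have "\<dots> \<le> emeasure N {..s}"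
    using assms(2) s by (intro emeasure_mono) auto
  finally show "emeasure M {..s - h} \<le> emeasure N {..s}" .
  have "emeasure N {..s} \<le> emeasure N {..<p + h}"
    using assms(2) s by (intro emeasure_mono) auto
  also have "\<dots> = emeasure M {..<p + h}"
    using assms(6) by simp
  also have "\<dots> \<le> emeasure M {..s + h}"
    using assms(1) s by (intro emeasure_mono) auto
  finally show "emeasure N {..s} \<le> emeasure M {..s + h}" .
qed

lemma levy_close_grid:
  fixes M N :: "real measure"
  assumes sets_M: "sets M = sets borel" and sets_N: "sets N = sets borel" and h: "0 < h"
    and M_below: "emeasure M {..<a} = 0"
    and M_total: "emeasure M {..<a + real K * h} = emeasure M UNIV"
    and N_total: "emeasure N UNIV = emeasure M UNIV"
    and grid: "\<And>j. j \<le> K \<Longrightarrow> emeasure N {..<a + real j * h} = emeasure M {..<a + real j * h}"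
  shows "levy_close M N h"
  unfolding levy_close_def
proof
  fix s
  have mono_M: "emeasure M A \<le> emeasure M B" and mono_N: "emeasure N A \<le> emeasure N B"
    if "A \<subseteq> B" "B \<in> sets borel" for A B
    using that sets_M sets_N by (auto intro!: emeasure_mono)
  consider "s < a" | "a + real K * h \<le> s" | k where "k < K" "s \<in> grid_cell a h k"
    using grid_cell_index[OF h] by (metis not_le)
  then show "emeasure M {..s - h} \<le> emeasure N {..s} \<and> emeasure N {..s} \<le> emeasure M {..s + h}"
  proof cases
    case 1
    have "emeasure M {..s - h} \<le> emeasure M {..<a}" "emeasure N {..s} \<le> emeasure N {..<a}"
      using 1 h by (auto intro!: mono_M mono_N)
    then show ?thesis
      using M_below grid[of 0] by simp
  next
    case 2
    have "emeasure M {..s - h} \<le> emeasure N {..<a + real K * h}"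
      using M_total grid[of K] mono_M[of _ UNIV] by simp
    moreover have "emeasure N {..<a + real K * h} \<le> emeasure N {..s}"
      using 2 by (intro mono_N) auto
    moreover have "emeasure N {..s} \<le> emeasure M {..<a + real K * h}"
      using M_total N_total mono_N[of _ UNIV] by simp
    moreover have "emeasure M {..<a + real K * h} \<le> emeasure M {..s + h}"
      using 2 h by (intro mono_M) auto
    ultimately show ?thesis by (meson order_trans)
  next
    case 3
    then show ?thesis
      using grid[of k] grid[of "Suc k"]
      by (intro levy_close_grid_step[OF sets_M sets_N, of "a + real k * h"])
        (auto simp: grid_cell_def algebra_simps)
  qed
qed

section \<open>Densities with square-root edges\<close>

definition sqrt_comparable :: "(real \<Rightarrow> real) \<Rightarrow> real \<Rightarrow> real \<Rightarrow> bool" where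
  "sqrt_comparable \<rho> a b \<longleftrightarrow> (\<exists>c C. 0 < c \<and> 0 < C \<and>
     (\<forall>t\<in>{a..b}. c * sqrt ((t - a) * (b - t)) \<le> \<rho> t \<and> \<rho> t \<le> C * sqrt ((t - a) * (b - t))))"

text \<open>On grid cell k the density is the multiple of sqrt((t - a)(b - t)) that carries the mass of the
  cell, so its distribution function agrees with that of M at the grid points.\<close>

locale grid_density = finite_measure M for M :: "real measure" +
  fixes a h :: real and K :: nat
  assumes sets_M: "sets M = sets borel"
    and h_pos: "0 < h" and K_pos: "0 < K"
    and null_below: "emeasure M {..<a} = 0"
    and null_above: "emeasure M {a + real K * h..} = 0"
    and cell_mass_pos: "\<And>k. k < K \<Longrightarrow> 0 < measure M (grid_cell a h k)"
begin

definition "b = a + real K * h"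

definition "profile k t = indicator (grid_cell a h k) t * sqrt ((t - a) * (b - t))"

definition "coef k = measure M (grid_cell a h k) / enn2real (\<integral>\<^sup>+t. ennreal (profile k t) \<partial>lborel)"

definition "dens t = (\<Sum>k<K. coef k * profile k t)"

lemma grid_cell_subset: "k < K \<Longrightarrow> grid_cell a h k \<subseteq> {a..<b}"
proof -
  assume "k < K"
  then have "real (Suc k) * h \<le> real K * h"
    using h_pos by (intro mult_right_mono) auto
  then show ?thesis
    using h_pos by (auto simp: grid_cell_def b_def)
qed

lemma profile_nonneg: "k < K \<Longrightarrow> 0 \<le> profile k t"
  using grid_cell_subset by (force simp: profile_def indicator_def)

lemma profile_measurable [measurable]: "profile k \<in> borel_measurable borel"
  unfolding profile_def grid_cell_def by measurable

lemma profile_integral_pos: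
  assumes k: "k < K"
  shows "0 < (\<integral>\<^sup>+t. ennreal (profile k t) \<partial>lborel)"
proof -
  define I where "I = {a + real k * h <..< a + real (Suc k) * h}"
  have pos: "0 < profile k t" if "t \<in> I" for t
    using that grid_cell_subset[OF k]
    by (force simp: I_def profile_def grid_cell_def intro!: mult_pos_pos)
  have "(AE t in lborel. profile k t = 0) \<Longrightarrow> (AE t in lborel. t \<notin> I)"
    by (erule AE_mp) (auto intro!: AE_I2 dest: pos)
  moreover have "\<not> (AE t in lborel. t \<notin> I)"
  proof -
    have "I \<in> sets lborel" "emeasure lborel I \<noteq> 0"
      using h_pos by (simp_all add: I_def algebra_simps)
    then show ?thesis
      using AE_iff_measurable[of I lborel "\<lambda>t. t \<notin> I"] by simp
  qed
  moreover have "ennreal (profile k t) = 0 \<longleftrightarrow> profile k t = 0" for t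
    using profile_nonneg[OF k, of t] by auto
  ultimately have "(\<integral>\<^sup>+t. ennreal (profile k t) \<partial>lborel) \<noteq> 0"
    by (subst nn_integral_0_iff_AE) auto
  then show ?thesis
    by (simp add: zero_less_iff_neq_zero)
qed

lemma profile_integral_finite:
  assumes k: "k < K"
  shows "(\<integral>\<^sup>+t. ennreal (profile k t) \<partial>lborel) < \<infinity>"
proof -
  have "profile k t \<le> (b - a) * indicator (grid_cell a h k) t" for t
  proof (cases "t \<in> grid_cell a h k")
    case True
    then have "a \<le> t" "t \<le> b"
      using grid_cell_subset[OF k] by auto
    then have "(t - a) * (b - t) \<le> (b - a) * (b - a)"
      by (intro mult_mono) auto
    then have "sqrt ((t - a) * (b - t)) \<le> b - a"
      using \<open>a \<le> t\<close> \<open>t \<le> b\<close> by (intro real_le_lsqrt) (simp_all add: power2_eq_square)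
    then show ?thesis
      using True by (simp add: profile_def)
  qed (simp add: profile_def)
  then have "(\<integral>\<^sup>+t. ennreal (profile k t) \<partial>lborel)
      \<le> (\<integral>\<^sup>+t. ennreal ((b - a) * indicator (grid_cell a h k) t) \<partial>lborel)"
    by (intro nn_integral_mono ennreal_leI)
  also have "\<dots> = ennreal (b - a) * emeasure lborel (grid_cell a h k)"
    using h_pos K_pos
    by (simp add: ennreal_mult' ennreal_indicator nn_integral_cmult_indicator b_def grid_cell_def)
  also have "\<dots> < \<infinity>"
    using h_pos by (simp add: grid_cell_def ennreal_mult_less_top algebra_simps)
  finally show ?thesis .
qed

lemma coef_pos: "k < K \<Longrightarrow> 0 < coef k"
  using cell_mass_pos profile_integral_pos profile_integral_finite
  by (auto simp: coef_def enn2real_positive_iff)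

lemma coef_profile_integral:
  assumes k: "k < K"
  shows "ennreal (coef k) * (\<integral>\<^sup>+t. ennreal (profile k t) \<partial>lborel) = emeasure M (grid_cell a h k)"
proof -
  define r where "r = enn2real (\<integral>\<^sup>+t. ennreal (profile k t) \<partial>lborel)"
  have I: "(\<integral>\<^sup>+t. ennreal (profile k t) \<partial>lborel) = ennreal r" "0 < r"
    using profile_integral_pos[OF k] profile_integral_finite[OF k]
    by (auto simp: r_def enn2real_positive_iff less_top)
  show ?thesis
    using I by (simp add: coef_def emeasure_eq_measure flip: r_def ennreal_mult)
qed

lemma dens_nonneg: "0 \<le> dens t"
  unfolding dens_def
  by (intro sum_nonneg mult_nonneg_nonneg) (auto intro: less_imp_le coef_pos profile_nonneg)

lemma dens_measurable [measurable]: "dens \<in> borel_measurable borel"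
  unfolding dens_def by measurable

lemma dens_outside:
  assumes "t \<notin> {a..b}"
  shows "dens t = 0"
proof -
  have "t \<notin> grid_cell a h k" if "k < K" for k
    using assms grid_cell_subset[OF that] by auto
  then show ?thesis by (simp add: dens_def profile_def)
qed

lemma emeasure_density_dens:
  assumes [measurable]: "A \<in> sets borel"
  shows "emeasure (density lborel dens) A
    = (\<Sum>k<K. ennreal (coef k) * (\<integral>\<^sup>+t. ennreal (profile k t) * indicator A t \<partial>lborel))"
proof -
  have "ennreal (dens t) = (\<Sum>k<K. ennreal (coef k) * ennreal (profile k t))" for t
    unfolding dens_def using coef_pos profile_nonneg
    by (subst sum_ennreal[symmetric]) (auto intro!: sum.cong simp: ennreal_mult less_imp_le)
  then have "ennreal (dens t) * indicator A t
      = (\<Sum>k<K. ennreal (coef k) * (ennreal (profile k t) * indicator A t))" for t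
    by (simp add: sum_distrib_right mult.assoc)
  then show ?thesis
    by (simp add: emeasure_density nn_integral_sum nn_integral_cmult)
qed

lemma sum_emeasure_grid_cell:
  "(\<Sum>k<j. emeasure M (grid_cell a h k)) = emeasure M {..<a + real j * h}"
proof (induction j)
  case 0
  then show ?case using null_below by simp
next
  case (Suc j)
  have "(\<Sum>k<Suc j. emeasure M (grid_cell a h k))
      = emeasure M {..<a + real j * h} + emeasure M (grid_cell a h j)"
    using Suc by simp
  also have "\<dots> = emeasure M ({..<a + real j * h} \<union> grid_cell a h j)"
    using sets_M by (intro plus_emeasure) (auto simp: grid_cell_def)
  also have "{..<a + real j * h} \<union> grid_cell a h j = {..<a + real (Suc j) * h}"
    using h_pos by (auto simp: grid_cell_def algebra_simps)
  finally show ?case .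
qed

lemma emeasure_density_dens_lessThan:
  assumes j: "j \<le> K"
  shows "emeasure (density lborel dens) {..<a + real j * h} = emeasure M {..<a + real j * h}"
proof -
  have cut: "(\<integral>\<^sup>+t. ennreal (profile k t) * indicator {..<a + real j * h} t \<partial>lborel)
      = (if k < j then \<integral>\<^sup>+t. ennreal (profile k t) \<partial>lborel else 0)" for k
  proof (cases "k < j")
    case True
    then have "real (Suc k) * h \<le> real j * h"
      using h_pos by (intro mult_right_mono) auto
    then show ?thesis
      using True by (auto intro!: nn_integral_cong simp: profile_def grid_cell_def indicator_def)
  next
    case False
    then have "real j * h \<le> real k * h"
      using h_pos by (intro mult_right_mono) auto
    then have zero: "ennreal (profile k t) * indicator {..<a + real j * h} t = 0" for t
      by (auto simp: profile_def grid_cell_def indicator_def)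
    show ?thesis
      using False by (simp only: zero) simp
  qed
  have "emeasure (density lborel dens) {..<a + real j * h}
      = (\<Sum>k<K. if k < j then emeasure M (grid_cell a h k) else 0)"
    unfolding emeasure_density_dens[OF borel_open[OF open_lessThan]]
    by (intro sum.cong refl) (simp add: cut coef_profile_integral)
  also have "\<dots> = (\<Sum>k\<in>{k\<in>{..<K}. k < j}. emeasure M (grid_cell a h k))"
    by (rule sum.inter_filter[symmetric]) simp
  also have "{k\<in>{..<K}. k < j} = {..<j}"
    using j by auto
  finally show ?thesis
    by (simp add: sum_emeasure_grid_cell)
qed

lemma emeasure_lessThan_b: "emeasure M {..<b} = emeasure M UNIV"
proof -
  have "emeasure M UNIV = emeasure M ({..<b} \<union> {b..})"
    by (metis ivl_disj_un_one(8) UNIV_eq_I Un_iff atLeast_iff lessThan_iff not_le)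
  also have "\<dots> = emeasure M {..<b} + emeasure M {b..}"
    using sets_M by (intro plus_emeasure[symmetric]) auto
  also have "\<dots> = emeasure M {..<b}"
    using null_above by (simp add: b_def)
  finally show ?thesis ..
qed

lemma emeasure_density_dens_UNIV: "emeasure (density lborel dens) UNIV = emeasure M UNIV"
proof -
  have "emeasure (density lborel dens) UNIV = (\<Sum>k<K. emeasure M (grid_cell a h k))"
    using coef_profile_integral by (simp add: emeasure_density_dens)
  also have "\<dots> = emeasure M UNIV"
    using emeasure_lessThan_b by (simp add: sum_emeasure_grid_cell b_def)
  finally show ?thesis .
qed

lemma levy_close_density_dens: "levy_close M (density lborel dens) h"
  using emeasure_lessThan_b emeasure_density_dens_UNIV emeasure_density_dens_lessThan
  by (intro levy_close_grid[OF sets_M _ h_pos null_below]) (simp_all add: b_def)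

lemma dens_sqrt_comparable: "sqrt_comparable dens a b"
proof -
  define c where "c = Min (coef ` {..<K})"
  define C where "C = (\<Sum>k<K. coef k)"
  have "0 < c"
    using K_pos coef_pos unfolding c_def by (subst Min_gr_iff) auto
  moreover have "0 < C"
    using K_pos coef_pos by (auto simp: C_def intro!: sum_pos)
  moreover have "c * sqrt ((t - a) * (b - t)) \<le> dens t \<and> dens t \<le> C * sqrt ((t - a) * (b - t))"
    if t: "t \<in> {a..b}" for t
  proof
    have sqrt_nonneg: "0 \<le> sqrt ((t - a) * (b - t))"
      using t by simp
    then have "profile k t \<le> sqrt ((t - a) * (b - t))" for k
      by (simp add: profile_def indicator_def)
    then have "dens t \<le> (\<Sum>k<K. coef k * sqrt ((t - a) * (b - t)))"
      unfolding dens_def by (intro sum_mono mult_left_mono) (auto intro: less_imp_le coef_pos)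
    then show "dens t \<le> C * sqrt ((t - a) * (b - t))"
      by (simp add: C_def sum_distrib_right)
    show "c * sqrt ((t - a) * (b - t)) \<le> dens t"
    proof (cases "t = b")
      case True
      then show ?thesis using dens_nonneg by simp
    next
      case False
      then obtain k where k: "k < K" "t \<in> grid_cell a h k"
        using grid_cell_index[OF h_pos, of a t K] t by (auto simp: b_def)
      have "c \<le> coef k"
        using k by (simp add: c_def)
      then have "c * sqrt ((t - a) * (b - t)) \<le> coef k * profile k t"
        using k sqrt_nonneg by (simp add: profile_def mult_right_mono)
      also have "\<dots> \<le> dens t"
        unfolding dens_def using k
        by (intro member_le_sum)
          (auto intro: mult_nonneg_nonneg less_imp_le coef_pos profile_nonneg)
      finally show ?thesis .
    qed
  qed
  ultimately show ?thesis
    unfolding sqrt_comparable_def by blast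
qed

end

lemma emeasure_pos_if_meets_support:
  fixes M :: "real measure"
  assumes "sets M = sets borel" "{\<alpha>..\<beta>} \<subseteq> measure_support M" "\<alpha> \<le> \<beta>"
    and "p < q" "p < \<beta>" "\<alpha> < q"
  shows "0 < emeasure M {p..<q}"
proof -
  define t where "t = (max \<alpha> p + min \<beta> q) / 2"
  have "t \<in> {\<alpha>..\<beta>}" "t \<in> {p<..<q}"
    using assms(3-6) by (auto simp: t_def max_def min_def)
  then have "0 < emeasure M {p<..<q}"
    using assms(2) by (auto simp: measure_support_def)
  also have "\<dots> \<le> emeasure M {p..<q}"
    using assms(1) by (intro emeasure_mono) auto
  finally show ?thesis .
qed

lemma exists_overhanging_grid:
  fixes \<alpha> \<beta> h :: real
  assumes "\<alpha> \<le> \<beta>" "0 < h"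
  obtains s K where "0 < s" "s < h" "0 < K" "\<alpha> - s + real K * h = \<beta> + s"
    "\<And>k. k < K \<Longrightarrow> \<alpha> - s + real k * h < \<beta> \<and> \<alpha> < \<alpha> - s + real (Suc k) * h"
proof -
  define K where "K = nat \<lfloor>(\<beta> - \<alpha>) / h\<rfloor> + 1"
  define s where "s = (real K * h - (\<beta> - \<alpha>)) / 2"
  have "real K - 1 \<le> (\<beta> - \<alpha>) / h" "(\<beta> - \<alpha>) / h < real K"
    using assms by (simp_all add: K_def) linarith+
  then have "(real K - 1) * h \<le> \<beta> - \<alpha>" "\<beta> - \<alpha> < real K * h"
    using assms(2) by (simp_all add: field_simps)
  then have s: "0 < s" "s < h" and end_eq: "\<alpha> - s + real K * h = \<beta> + s"
    using assms(2) by (simp_all add: s_def algebra_simps)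
  have "\<alpha> - s + real k * h < \<beta> \<and> \<alpha> < \<alpha> - s + real (Suc k) * h" if "k < K" for k
  proof -
    have "real k * h \<le> (real K - 1) * h"
      using that assms(2) by (intro mult_right_mono) auto
    then have "real k * h \<le> real K * h - h"
      by (simp add: algebra_simps)
    moreover have "0 \<le> real k * h" "real (Suc k) * h = real k * h + h"
      using assms(2) by (simp_all add: algebra_simps)
    ultimately show ?thesis
      using s end_eq by linarith
  qed
  then show thesis
    using that[OF s _ end_eq] by (simp add: K_def)
qed

lemma exists_grid_density:
  fixes M :: "real measure"
  assumes "finite_measure M" and sets_M: "sets M = sets borel"
    and "\<alpha> \<le> \<beta>" and support: "{\<alpha>..\<beta>} \<subseteq> measure_support M"
    and null: "emeasure M (- {\<alpha>..\<beta>}) = 0" and h: "0 < h"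
  obtains a b \<rho> where "{\<alpha>..\<beta>} \<subseteq> {a<..<b}" "{a..b} \<subseteq> {\<alpha> - h<..<\<beta> + h}"
    "\<rho> \<in> borel_measurable borel" "\<And>t. 0 \<le> \<rho> t" "\<And>t. t \<notin> {a..b} \<Longrightarrow> \<rho> t = 0"
    "sqrt_comparable \<rho> a b" "levy_close M (density lborel \<rho>) h"
    "emeasure (density lborel \<rho>) UNIV = emeasure M UNIV"
proof -
  interpret finite_measure M by fact
  obtain s K where s: "0 < s" "s < h" "0 < K" and end_eq: "\<alpha> - s + real K * h = \<beta> + s"
    and cells: "\<And>k. k < K \<Longrightarrow> \<alpha> - s + real k * h < \<beta> \<and> \<alpha> < \<alpha> - s + real (Suc k) * h"
    using exists_overhanging_grid[OF \<open>\<alpha> \<le> \<beta>\<close> h] by blast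
  have null_off: "emeasure M A = 0" if "A \<inter> {\<alpha>..\<beta>} = {}" "A \<in> sets borel" for A
  proof -
    have "emeasure M A \<le> emeasure M (- {\<alpha>..\<beta>})"
      using that sets_M by (intro emeasure_mono) auto
    then show ?thesis
      using null by simp
  qed
  interpret grid_density M "\<alpha> - s" h K
  proof
    show "emeasure M {..<\<alpha> - s} = 0" "emeasure M {\<alpha> - s + real K * h..} = 0"
      using s end_eq by (auto intro!: null_off)
    show "0 < measure M (grid_cell (\<alpha> - s) h k)" if "k < K" for k
      using emeasure_pos_if_meets_support[OF sets_M support \<open>\<alpha> \<le> \<beta>\<close>] cells[OF that] h
      by (simp add: grid_cell_def emeasure_eq_measure)
  qed (use sets_M h s in auto)
  show thesis
  proof (rule that[OF _ _ dens_measurable dens_nonneg dens_outside dens_sqrt_comparable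
        levy_close_density_dens emeasure_density_dens_UNIV])
    show "{\<alpha>..\<beta>} \<subseteq> {\<alpha> - s<..<b}" "{\<alpha> - s..b} \<subseteq> {\<alpha> - h<..<\<beta> + h}"
      using s end_eq by (auto simp: b_def)
  qed
qed

section \<open>Approximation component by component\<close>

lemma sum_disjoint_supports:
  assumes "finite I"
    and disjoint: "\<And>i j. i \<in> I \<Longrightarrow> j \<in> I \<Longrightarrow> i \<noteq> j \<Longrightarrow> {a i..b i} \<inter> {a j..b j} = {}"
    and outside: "\<And>i t. i \<in> I \<Longrightarrow> t \<notin> {a i..b i} \<Longrightarrow> r i t = 0"
  shows "\<And>i t. i \<in> I \<Longrightarrow> t \<in> {a i..b i} \<Longrightarrow> (\<Sum>j\<in>I. r j t) = r i t"
    and "\<And>t. t \<notin> (\<Union>i\<in>I. {a i..b i}) \<Longrightarrow> (\<Sum>j\<in>I. r j t) = 0"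
proof -
  fix i t assume i: "i \<in> I" "t \<in> {a i..b i}"
  have "r j t = 0" if "j \<in> I - {i}" for j
    using that i disjoint[of i j] outside[of j t] by blast
  then show "(\<Sum>j\<in>I. r j t) = r i t"
    using i assms(1) by (simp add: sum.remove[of _ i])
next
  show "(\<Sum>j\<in>I. r j t) = 0" if "t \<notin> (\<Union>i\<in>I. {a i..b i})" for t
    using that outside by simp
qed

lemma emeasure_density_sum:
  fixes f :: "'i \<Rightarrow> 'a \<Rightarrow> real"
  assumes "\<And>i. i \<in> I \<Longrightarrow> f i \<in> borel_measurable M" "\<And>i t. i \<in> I \<Longrightarrow> 0 \<le> f i t"
    and "A \<in> sets M"
  shows "emeasure (density M (\<lambda>t. \<Sum>i\<in>I. f i t)) A = (\<Sum>i\<in>I. emeasure (density M (f i)) A)"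
proof -
  have "emeasure (density M (\<lambda>t. \<Sum>i\<in>I. f i t)) A
      = (\<integral>\<^sup>+t. (\<Sum>i\<in>I. ennreal (f i t) * indicator A t) \<partial>M)"
    using assms by (simp add: emeasure_density sum_ennreal sum_distrib_right flip: sum_ennreal)
  also have "\<dots> = (\<Sum>i\<in>I. emeasure (density M (f i)) A)"
    using assms by (simp add: nn_integral_sum emeasure_density)
  finally show ?thesis .
qed

lemma exists_component_density:
  fixes \<mu> :: "real measure"
  assumes "finite_measure \<mu>" and sets_\<mu>: "sets \<mu> = sets borel"
    and compact: "compact (measure_support \<mu>)" and finite: "finite (components (measure_support \<mu>))"
    and C: "C \<in> components (measure_support \<mu>)" and h: "0 < h"
  obtains a b \<rho> where "C \<subseteq> {a<..<b}" "\<And>x. x \<in> {a..b} \<Longrightarrow> \<exists>y\<in>C. dist x y < h"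
    "\<rho> \<in> borel_measurable borel" "\<And>t. 0 \<le> \<rho> t" "\<And>t. t \<notin> {a..b} \<Longrightarrow> \<rho> t = 0"
    "sqrt_comparable \<rho> a b" "levy_close (density \<mu> (indicator C)) (density lborel \<rho>) h"
    "emeasure (density lborel \<rho>) UNIV = emeasure \<mu> C"
proof -
  interpret finite_measure \<mu> by fact
  obtain \<alpha> \<beta> where "\<alpha> \<le> \<beta>" and C_eq: "C = {\<alpha>..\<beta>}"
    using component_compact_real_eq_interval[OF compact C] .
  let ?M = "density \<mu> (indicator C)"
  have emeasure_M: "emeasure ?M A = emeasure \<mu> (C \<inter> A)" if "A \<in> sets borel" for A
    using that sets_\<mu> by (simp add: C_eq emeasure_restricted)
  have "finite_measure ?M"
    using emeasure_M[of UNIV] sets_eq_imp_space_eq[OF sets_\<mu>]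
    by (intro finite_measureI) (simp add: emeasure_eq_measure)
  moreover have "sets ?M = sets borel"
    using sets_\<mu> by simp
  moreover have "{\<alpha>..\<beta>} \<subseteq> measure_support ?M"
    using component_subset_measure_support_restrict[OF sets_\<mu> finite C] by (simp add: C_eq)
  moreover have "emeasure ?M (- {\<alpha>..\<beta>}) = 0"
    using emeasure_M[of "- {\<alpha>..\<beta>}"] by (simp add: C_eq)
  ultimately obtain a b \<rho> where ab: "{\<alpha>..\<beta>} \<subseteq> {a<..<b}" "{a..b} \<subseteq> {\<alpha> - h<..<\<beta> + h}"
    and \<rho>: "\<rho> \<in> borel_measurable borel" "\<And>t. 0 \<le> \<rho> t" "\<And>t. t \<notin> {a..b} \<Longrightarrow> \<rho> t = 0"
      "sqrt_comparable \<rho> a b" "levy_close ?M (density lborel \<rho>) h"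
      "emeasure (density lborel \<rho>) UNIV = emeasure ?M UNIV"
    using exists_grid_density[OF _ _ \<open>\<alpha> \<le> \<beta>\<close> _ _ h] by blast
  show thesis
  proof (rule that[OF _ _ \<rho>(1-5)])
    show "C \<subseteq> {a<..<b}"
      using ab(1) by (simp add: C_eq)
    show "\<exists>y\<in>C. dist x y < h" if "x \<in> {a..b}" for x
    proof -
      have "\<alpha> - h < x" "x < \<beta> + h"
        using that ab(2) by auto
      then show ?thesis
        using \<open>\<alpha> \<le> \<beta>\<close> h by (intro bexI[of _ "max \<alpha> (min \<beta> x)"]) (auto simp: C_eq dist_real_def)
    qed
    show "emeasure (density lborel \<rho>) UNIV = emeasure \<mu> C"
      using \<rho>(6) emeasure_M[of UNIV] by simp
  qed
qed

lemma levy_close_sum_components: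
  fixes \<mu> :: "real measure" and r :: "real set \<Rightarrow> real \<Rightarrow> real"
  defines "\<C> \<equiv> components (measure_support \<mu>)"
  assumes "prob_space \<mu>" and sets_\<mu>: "sets \<mu> = sets borel" and finite: "finite \<C>"
    and r: "\<And>C. C \<in> \<C> \<Longrightarrow> r C \<in> borel_measurable borel" "\<And>C t. C \<in> \<C> \<Longrightarrow> 0 \<le> r C t"
    and close: "\<And>C. C \<in> \<C> \<Longrightarrow> levy_close (density \<mu> (indicator C)) (density lborel (r C)) e"
    and mass: "\<And>C. C \<in> \<C> \<Longrightarrow> emeasure (density lborel (r C)) UNIV = emeasure \<mu> C"
  shows "prob_space (density lborel (\<lambda>t. \<Sum>C\<in>\<C>. r C t))"
    and "levy_close \<mu> (density lborel (\<lambda>t. \<Sum>C\<in>\<C>. r C t)) e"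
proof -
  interpret prob_space \<mu> by fact
  have sets_C: "C \<in> sets \<mu>" if "C \<in> \<C>" for C
    using closed_components[OF closed_measure_support that[unfolded \<C>_def]] sets_\<mu>
    by (simp add: borel_closed)
  have \<mu>_sum: "emeasure \<mu> A = (\<Sum>C\<in>\<C>. emeasure (density \<mu> (indicator C)) A)"
    if "A \<in> sets borel" for A
    using emeasure_eq_sum_components[OF sets_\<mu> finite[unfolded \<C>_def]] that sets_\<mu> sets_C
    by (simp add: \<C>_def emeasure_restricted)
  have \<nu>_sum: "emeasure (density lborel (\<lambda>t. \<Sum>C\<in>\<C>. r C t)) A
      = (\<Sum>C\<in>\<C>. emeasure (density lborel (r C)) A)" if "A \<in> sets borel" for A
    using that r by (intro emeasure_density_sum) auto
  have "emeasure (density lborel (\<lambda>t. \<Sum>C\<in>\<C>. r C t)) UNIV = (\<Sum>C\<in>\<C>. emeasure \<mu> C)"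
    using \<nu>_sum[of UNIV] mass by simp
  also have "\<dots> = emeasure \<mu> UNIV"
    using emeasure_eq_sum_components[OF sets_\<mu> finite[unfolded \<C>_def], of UNIV] sets_\<mu>
    by (simp add: \<C>_def)
  finally show "prob_space (density lborel (\<lambda>t. \<Sum>C\<in>\<C>. r C t))"
    using emeasure_space_1 sets_eq_imp_space_eq[OF sets_\<mu>] by (intro prob_spaceI) simp
  show "levy_close \<mu> (density lborel (\<lambda>t. \<Sum>C\<in>\<C>. r C t)) e"
    by (rule levy_close_sum[where I = \<C>]) (simp_all add: close \<mu>_sum \<nu>_sum)
qed

lemma thickenings_disjoint:
  fixes C D :: "'a::metric_space set"
  assumes "\<And>x. x \<in> A \<Longrightarrow> \<exists>y\<in>C. dist x y < h" "\<And>x. x \<in> B \<Longrightarrow> \<exists>z\<in>D. dist x z < h"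
    and "\<And>y z. y \<in> C \<Longrightarrow> z \<in> D \<Longrightarrow> 2 * h \<le> dist y z"
  shows "A \<inter> B = {}"
proof (rule ccontr)
  assume "A \<inter> B \<noteq> {}"
  then obtain x y z where "y \<in> C" "dist x y < h" "z \<in> D" "dist x z < h"
    using assms(1,2) by blast
  then have "dist y z < 2 * h"
    using dist_triangle3[of y z x] by linarith
  then show False
    using assms(3)[OF \<open>y \<in> C\<close> \<open>z \<in> D\<close>] by simp
qed

lemma exists_component_densities:
  fixes \<mu> :: "real measure"
  defines "\<C> \<equiv> components (measure_support \<mu>)"
  assumes "finite_measure \<mu>" "sets \<mu> = sets borel" "compact (measure_support \<mu>)" "finite \<C>"
    and h: "0 < h"
    and sep: "\<forall>C\<in>\<C>. \<forall>D\<in>\<C>. C \<noteq> D \<longrightarrow> (\<forall>x\<in>C. \<forall>y\<in>D. 2 * h \<le> dist x y)"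
  obtains a b :: "real set \<Rightarrow> real" and r :: "real set \<Rightarrow> real \<Rightarrow> real" where
    "\<And>C. C \<in> \<C> \<Longrightarrow> a C < b C"
    "\<And>C D. C \<in> \<C> \<Longrightarrow> D \<in> \<C> \<Longrightarrow> C \<noteq> D \<Longrightarrow> {a C..b C} \<inter> {a D..b D} = {}"
    "\<And>C. C \<in> \<C> \<Longrightarrow> r C \<in> borel_measurable borel" "\<And>C t. C \<in> \<C> \<Longrightarrow> 0 \<le> r C t"
    "\<And>C t. C \<in> \<C> \<Longrightarrow> t \<notin> {a C..b C} \<Longrightarrow> r C t = 0"
    "\<And>C. C \<in> \<C> \<Longrightarrow> sqrt_comparable (r C) (a C) (b C)"
    "\<And>C. C \<in> \<C> \<Longrightarrow> levy_close (density \<mu> (indicator C)) (density lborel (r C)) h"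
    "\<And>C. C \<in> \<C> \<Longrightarrow> emeasure (density lborel (r C)) UNIV = emeasure \<mu> C"
proof -
  define approx where "approx C a b r \<longleftrightarrow> C \<subseteq> {a<..<b} \<and> (\<forall>x\<in>{a..b}. \<exists>y\<in>C. dist x y < h)
      \<and> r \<in> borel_measurable borel \<and> (\<forall>t. 0 \<le> r t) \<and> (\<forall>t. t \<notin> {a..b} \<longrightarrow> r t = 0)
      \<and> sqrt_comparable r a b \<and> levy_close (density \<mu> (indicator C)) (density lborel r) h
      \<and> emeasure (density lborel r) UNIV = emeasure \<mu> C" for C a b r
  have "\<exists>a b r. approx C a b r" if "C \<in> \<C>" for C
    unfolding approx_def
    by (rule exists_component_density[OF assms(2-4) assms(5)[unfolded \<C>_def]
          that[unfolded \<C>_def] h]) blast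
  then obtain a b r where abr: "\<And>C. C \<in> \<C> \<Longrightarrow> approx C (a C) (b C) (r C)"
    by metis
  show thesis
  proof (rule that[of a b r])
    show "a C < b C" if "C \<in> \<C>" for C
      using abr[OF that] in_components_nonempty[OF that[unfolded \<C>_def]]
      by (fastforce simp: approx_def)
    show "{a C..b C} \<inter> {a D..b D} = {}" if CD: "C \<in> \<C>" "D \<in> \<C>" "C \<noteq> D" for C D
      using abr[OF CD(1)] abr[OF CD(2)] sep CD
      by (intro thickenings_disjoint[of _ C h _ D]) (auto simp: approx_def)
  qed (use abr in \<open>simp_all add: approx_def\<close>)
qed

lemma exists_levy_close_density:
  fixes \<mu> :: "real measure"
  defines "\<C> \<equiv> components (measure_support \<mu>)"
  assumes "prob_space \<mu>" and sets_\<mu>: "sets \<mu> = sets borel"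
    and compact: "compact (measure_support \<mu>)" and finite: "finite \<C>" and \<delta>: "0 < \<delta>"
  obtains a b :: "real set \<Rightarrow> real" and \<rho> :: "real \<Rightarrow> real" where
    "\<And>C. C \<in> \<C> \<Longrightarrow> a C < b C"
    "\<And>C D. C \<in> \<C> \<Longrightarrow> D \<in> \<C> \<Longrightarrow> C \<noteq> D \<Longrightarrow> {a C..b C} \<inter> {a D..b D} = {}"
    "\<And>C. C \<in> \<C> \<Longrightarrow> sqrt_comparable \<rho> (a C) (b C)"
    "\<And>t. t \<notin> (\<Union>C\<in>\<C>. {a C..b C}) \<Longrightarrow> \<rho> t = 0"
    "\<rho> \<in> borel_measurable borel" "prob_space (density lborel \<rho>)" "levy_close \<mu> (density lborel \<rho>) \<delta>"
proof -
  interpret prob_space \<mu> by fact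
  obtain d where "0 < d"
    and sep: "\<And>C D x y. C \<in> \<C> \<Longrightarrow> D \<in> \<C> \<Longrightarrow> C \<noteq> D \<Longrightarrow> x \<in> C \<Longrightarrow> y \<in> D \<Longrightarrow> d \<le> dist x y"
    using components_separated[OF compact finite[unfolded \<C>_def]] unfolding \<C>_def by blast
  define h where "h = min \<delta> (d / 2)"
  have h: "0 < h" "h \<le> \<delta>"
    using \<delta> \<open>0 < d\<close> by (auto simp: h_def)
  have sep_h: "\<forall>C\<in>\<C>. \<forall>D\<in>\<C>. C \<noteq> D \<longrightarrow> (\<forall>x\<in>C. \<forall>y\<in>D. 2 * h \<le> dist x y)"
    using sep by (force simp: h_def)
  obtain a b r where ab: "\<And>C. C \<in> \<C> \<Longrightarrow> a C < b C"
    and disjoint: "\<And>C D. C \<in> \<C> \<Longrightarrow> D \<in> \<C> \<Longrightarrow> C \<noteq> D \<Longrightarrow> {a C..b C} \<inter> {a D..b D} = {}"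
    and r: "\<And>C. C \<in> \<C> \<Longrightarrow> r C \<in> borel_measurable borel" "\<And>C t. C \<in> \<C> \<Longrightarrow> 0 \<le> r C t"
      "\<And>C t. C \<in> \<C> \<Longrightarrow> t \<notin> {a C..b C} \<Longrightarrow> r C t = 0"
      "\<And>C. C \<in> \<C> \<Longrightarrow> sqrt_comparable (r C) (a C) (b C)"
      "\<And>C. C \<in> \<C> \<Longrightarrow> levy_close (density \<mu> (indicator C)) (density lborel (r C)) h"
      "\<And>C. C \<in> \<C> \<Longrightarrow> emeasure (density lborel (r C)) UNIV = emeasure \<mu> C"
    using exists_component_densities[OF finite_measure_axioms sets_\<mu> compact finite[unfolded \<C>_def]
        h(1) sep_h[unfolded \<C>_def]]
    unfolding \<C>_def by blast
  define \<rho> where "\<rho> = (\<lambda>t. \<Sum>C\<in>\<C>. r C t)"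
  have \<rho>_on: "\<rho> t = r C t" if "C \<in> \<C>" "t \<in> {a C..b C}" for C t
    unfolding \<rho>_def
    by (rule sum_disjoint_supports(1)[of \<C> a b]) (use finite disjoint r(3) that in blast)+
  have \<rho>_off: "\<rho> t = 0" if "t \<notin> (\<Union>C\<in>\<C>. {a C..b C})" for t
    unfolding \<rho>_def
    by (rule sum_disjoint_supports(2)[of \<C> a b]) (use finite disjoint r(3) that in blast)+
  have prob: "prob_space (density lborel \<rho>)"
    unfolding \<rho>_def \<C>_def
    by (rule levy_close_sum_components) (use assms(2) sets_\<mu> finite r in \<open>simp_all add: \<C>_def\<close>)
  have close: "levy_close \<mu> (density lborel \<rho>) h"
    unfolding \<rho>_def \<C>_def
    by (rule levy_close_sum_components) (use assms(2) sets_\<mu> finite r in \<open>simp_all add: \<C>_def\<close>)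
  show thesis
  proof (rule that[OF ab disjoint])
    show "sqrt_comparable \<rho> (a C) (b C)" if "C \<in> \<C>" for C
      using r(4)[OF that] \<rho>_on[OF that] by (simp add: sqrt_comparable_def)
    show "\<rho> t = 0" if "t \<notin> (\<Union>C\<in>\<C>. {a C..b C})" for t
      using that by (rule \<rho>_off)
    show "\<rho> \<in> borel_measurable borel"
      using r(1) unfolding \<rho>_def by (rule borel_measurable_sum)
    show "prob_space (density lborel \<rho>)"
      by (fact prob)
    show "levy_close \<mu> (density lborel \<rho>) \<delta>"
      using close sets_\<mu> h(2) by (rule levy_close_mono)
  qed
qed

lemma exists_levy_close_density_enumerated:
  fixes \<mu> :: "real measure"
  assumes "prob_space \<mu>" "sets \<mu> = sets borel" "compact (measure_support \<mu>)"
    "finite (components (measure_support \<mu>))" "card (components (measure_support \<mu>)) = n"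
    "0 < \<delta>"
  obtains a b :: "nat \<Rightarrow> real" and \<rho> :: "real \<Rightarrow> real" where
    "\<forall>j<n. a j < b j" "\<forall>i<n. \<forall>j<n. i \<noteq> j \<longrightarrow> {a i..b i} \<inter> {a j..b j} = {}"
    "\<forall>j<n. sqrt_comparable \<rho> (a j) (b j)"
    "emeasure (density lborel \<rho>) (UNIV - (\<Union>j<n. {a j..b j})) = 0"
    "\<rho> \<in> borel_measurable borel" "real_distribution (density lborel \<rho>)"
    "levy_close \<mu> (density lborel \<rho>) \<delta>"
proof -
  let ?\<C> = "components (measure_support \<mu>)"
  obtain a b \<rho> where ab: "\<And>C. C \<in> ?\<C> \<Longrightarrow> a C < b C"
    and disjoint: "\<And>C D. C \<in> ?\<C> \<Longrightarrow> D \<in> ?\<C> \<Longrightarrow> C \<noteq> D \<Longrightarrow> {a C..b C} \<inter> {a D..b D} = {}"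
    and comparable: "\<And>C. C \<in> ?\<C> \<Longrightarrow> sqrt_comparable \<rho> (a C) (b C)"
    and outside: "\<And>t. t \<notin> (\<Union>C\<in>?\<C>. {a C..b C}) \<Longrightarrow> \<rho> t = 0"
    and [measurable]: "\<rho> \<in> borel_measurable borel"
    and \<nu>: "prob_space (density lborel \<rho>)" and close: "levy_close \<mu> (density lborel \<rho>) \<delta>"
    using exists_levy_close_density[OF assms(1-4,6)] by blast
  obtain K where K: "bij_betw K {..<n} ?\<C>"
    using ex_bij_betw_nat_finite[OF assms(4)] assms(5) by (auto simp: atLeast0LessThan)
  have "(\<Union>j<n. {a (K j)..b (K j)}) = (\<Union>C\<in>K ` {..<n}. {a C..b C})"
    by (simp add: image_image)
  then have "(\<Union>j<n. {a (K j)..b (K j)}) = (\<Union>C\<in>?\<C>. {a C..b C})"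
    using bij_betw_imp_surj_on[OF K] by simp
  moreover have "UNIV - (\<Union>j<n. {a (K j)..b (K j)}) \<in> sets borel"
    by (intro borel_open open_Diff closed_UN) auto
  ultimately have null: "emeasure (density lborel \<rho>) (UNIV - (\<Union>j<n. {a (K j)..b (K j)})) = 0"
    using outside
    by (subst emeasure_density) (auto intro!: nn_integral_zero' AE_I2 split: split_indicator)
  have disjoint_K: "\<forall>i<n. \<forall>j<n. i \<noteq> j \<longrightarrow> {a (K i)..b (K i)} \<inter> {a (K j)..b (K j)} = {}"
    using disjoint bij_betwE[OF K] bij_betw_imp_inj_on[OF K] by (metis inj_on_contraD lessThan_iff)
  have "real_distribution (density lborel \<rho>)"
    using \<nu> by (simp add: real_distribution_def real_distribution_axioms_def)
  moreover have "\<forall>j<n. a (K j) < b (K j)" "\<forall>j<n. sqrt_comparable \<rho> (a (K j)) (b (K j))"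
    using ab comparable bij_betwE[OF K] by blast+
  ultimately show thesis
    using disjoint_K null close by (intro that[of "\<lambda>j. a (K j)" "\<lambda>j. b (K j)" \<rho>]) simp_all
qed

section \<open>Quantile coupling\<close>

definition quantile :: "real measure \<Rightarrow> real \<Rightarrow> real" where
  "quantile M \<omega> = Inf {x. \<omega> \<le> cdf M x}"

lemma quantile_le_iff:
  assumes "real_distribution M" "0 < \<omega>" "\<omega> < 1"
  shows "quantile M \<omega> \<le> x \<longleftrightarrow> \<omega> \<le> cdf M x"
proof -
  interpret cdf_distribution M
    using assms(1) by (simp add: cdf_distribution_def)
  show ?thesis
    unfolding quantile_def by (rule pseudoinverse[OF assms(2,3), symmetric])
qed

lemma quantile_vimage_atMost:
  assumes "real_distribution M"
  shows "quantile M -` {..x} \<inter> {0<..<1} = {0<..<1} \<inter> {..cdf M x}"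
  using quantile_le_iff[OF assms] by auto

lemma prob_space_lebesgue_on_Ioo01: "prob_space (lebesgue_on {0<..<1::real})"
  by (rule prob_space_restrict_space) auto

lemma measure_lebesgue_on_Ioo01_atMost:
  assumes "0 \<le> c" "c \<le> 1"
  shows "measure (lebesgue_on {0<..<1}) ({0<..<1} \<inter> {..c}) = c"
proof (cases "c < 1")
  case True
  then have "{0<..<1} \<inter> {..c} = {0<..c}" by auto
  moreover have "measure (lebesgue_on {0<..<1}) {0<..c} = measure lebesgue {0<..c}"
    using True by (intro measure_restrict_space) auto
  ultimately show ?thesis using assms by simp
next
  case False
  then have "{0<..<1} \<inter> {..c} = {0<..<1::real}" "c = 1" using assms by auto
  then show ?thesis
    using prob_space.prob_space[OF prob_space_lebesgue_on_Ioo01] by simp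
qed

lemma quantile_measurable:
  assumes M: "real_distribution M"
  shows "quantile M \<in> borel_measurable (lebesgue_on {0<..<1})"
proof (subst borel_measurable_iff_le, intro allI)
  fix x
  have "{\<omega> \<in> space (lebesgue_on {0<..<1}). quantile M \<omega> \<le> x} = {0<..<1} \<inter> {..cdf M x}"
    by (auto simp flip: quantile_vimage_atMost[OF M])
  also have "\<dots> \<in> sets (lebesgue_on {0<..<1})"
    by (auto simp: sets_restrict_space_iff)
  finally show "{\<omega> \<in> space (lebesgue_on {0<..<1}). quantile M \<omega> \<le> x}
    \<in> sets (lebesgue_on {0<..<1})" .
qed

lemma distr_quantile:
  assumes M: "real_distribution M"
  shows "distr (lebesgue_on {0<..<1}) borel (quantile M) = M"
proof (rule cdf_unique)
  interpret prob_space "lebesgue_on {0<..<1::real}" by (rule prob_space_lebesgue_on_Ioo01)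
  show "real_distribution (distr (lebesgue_on {0<..<1}) borel (quantile M))"
    using quantile_measurable[OF M] by simp
  show "cdf (distr (lebesgue_on {0<..<1}) borel (quantile M)) = cdf M"
  proof
    fix x
    have "cdf (distr (lebesgue_on {0<..<1}) borel (quantile M)) x
        = measure (lebesgue_on {0<..<1}) (quantile M -` {..x} \<inter> {0<..<1})"
      using quantile_measurable[OF M] by (simp add: cdf_def measure_distr)
    also have "\<dots> = cdf M x"
      using M by (simp add: quantile_vimage_atMost measure_lebesgue_on_Ioo01_atMost
          real_distribution.cdf_bounded_prob finite_borel_measure.cdf_nonneg
          real_distribution.finite_borel_measure_M)
    finally show "cdf (distr (lebesgue_on {0<..<1}) borel (quantile M)) x = cdf M x" .
  qed
qed fact

lemma quantile_levy_close:
  assumes M: "real_distribution M" and N: "real_distribution N" and MN: "levy_close M N e"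
    and \<omega>: "0 < \<omega>" "\<omega> < 1"
  shows "\<bar>quantile M \<omega> - quantile N \<omega>\<bar> \<le> e"
proof -
  interpret M: real_distribution M by (rule M)
  interpret N: real_distribution N by (rule N)
  have cdf_close: "cdf M (x - e) \<le> cdf N x" "cdf N x \<le> cdf M (x + e)" for x
    using MN by (auto simp: levy_close_def cdf_def M.emeasure_eq_measure N.emeasure_eq_measure)
  note qM = quantile_le_iff[OF M \<omega>] and qN = quantile_le_iff[OF N \<omega>]
  have "\<omega> \<le> cdf N (quantile N \<omega>)" using qN[of "quantile N \<omega>"] by simp
  also have "\<dots> \<le> cdf M (quantile N \<omega> + e)" by (rule cdf_close(2))
  finally have "quantile M \<omega> \<le> quantile N \<omega> + e" using qM by simp
  moreover have "\<omega> \<le> cdf M (quantile M \<omega>)" using qM[of "quantile M \<omega>"] by simp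
  moreover have "cdf M (quantile M \<omega>) \<le> cdf N (quantile M \<omega> + e)"
    using cdf_close(1)[of "quantile M \<omega> + e"] by simp
  ultimately have "quantile N \<omega> \<le> quantile M \<omega> + e" using qN by (meson order_trans)
  with \<open>quantile M \<omega> \<le> quantile N \<omega> + e\<close> show ?thesis by linarith
qed

lemma quantile_bounded_support_Linfty01:
  assumes M: "real_distribution M" and bdd: "bounded (measure_support M)"
  shows "quantile M \<in> Linfty01"
proof -
  interpret real_distribution M by (rule M)
  obtain B where B: "\<And>x. x \<in> measure_support M \<Longrightarrow> \<bar>x\<bar> \<le> B"
    using bdd by (auto simp: bounded_real)
  have null: "emeasure M A = 0" if "A \<inter> measure_support M = {}" "A \<in> sets borel" for A
    using emeasure_disjoint_measure_support[OF events_eq_borel] that by simp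
  have "cdf M (- B - 1) = 0"
    using null[of "{..- B - 1}"] B by (force simp: cdf_def emeasure_eq_measure)
  moreover have "cdf M B = 1"
  proof -
    have "prob {B<..} = 0"
      using null[of "{B<..}"] B by (force simp: emeasure_eq_measure)
    moreover have "UNIV - {B<..} = {..B}" by auto
    ultimately show ?thesis
      using prob_compl[of "{B<..}"] by (simp add: cdf_def)
  qed
  ultimately have "\<bar>quantile M \<omega>\<bar> \<le> B + 1" if "0 < \<omega>" "\<omega> < 1" for \<omega>
    using quantile_le_iff[OF M that, of B] quantile_le_iff[OF M that, of "- B - 1"] that by auto
  then show ?thesis
    using quantile_measurable[OF M] by (auto simp: Linfty01_def intro!: exI[of _ "B + 1"] AE_I2)
qed

lemma Linfty01_if_close:
  assumes f: "f \<in> Linfty01" and g: "g \<in> borel_measurable (lebesgue_on {0<..<1})"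
    and close: "\<And>t. t \<in> {0<..<1} \<Longrightarrow> \<bar>f t - g t\<bar> \<le> e"
  shows "g \<in> Linfty01"
proof -
  obtain B where "AE t in lebesgue_on {0<..<1}. \<bar>f t\<bar> \<le> B"
    using f by (auto simp: Linfty01_def)
  moreover have "AE t in lebesgue_on {0<..<1}. \<bar>f t\<bar> \<le> B \<longrightarrow> \<bar>g t\<bar> \<le> B + e"
  proof (rule AE_I2, rule impI)
    fix t assume "t \<in> space (lebesgue_on {0<..<1})" "\<bar>f t\<bar> \<le> B"
    then show "\<bar>g t\<bar> \<le> B + e"
      using close[of t] by simp
  qed
  ultimately have "AE t in lebesgue_on {0<..<1}. \<bar>g t\<bar> \<le> B + e"
    by (rule AE_mp)
  then show ?thesis
    using g by (auto simp: Linfty01_def)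
qed

lemma quantile_coupling:
  assumes M: "real_distribution M" and N: "real_distribution N"
    and close: "levy_close M N e" and bdd: "bounded (measure_support M)"
  shows "quantile M \<in> Linfty01" "quantile N \<in> Linfty01"
    "esssup (lebesgue_on {0<..<1}) (\<lambda>t. ereal \<bar>quantile M t - quantile N t\<bar>) \<le> ereal e"
    "distr (lebesgue_on {0<..<1}) borel (quantile M) = M"
    "distr (lebesgue_on {0<..<1}) borel (quantile N) = N"
proof -
  have diff: "\<bar>quantile M t - quantile N t\<bar> \<le> e" if "t \<in> {0<..<1}" for t
    using that quantile_levy_close[OF M N close] by simp
  show "quantile M \<in> Linfty01"
    by (rule quantile_bounded_support_Linfty01[OF M bdd])
  then show "quantile N \<in> Linfty01"
    using quantile_measurable[OF N] diff by (rule Linfty01_if_close)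
  show "esssup (lebesgue_on {0<..<1}) (\<lambda>t. ereal \<bar>quantile M t - quantile N t\<bar>) \<le> ereal e"
    using diff quantile_measurable[OF M] quantile_measurable[OF N]
    by (intro esssup_I) (auto intro!: AE_I2)
  show "distr (lebesgue_on {0<..<1}) borel (quantile M) = M"
    "distr (lebesgue_on {0<..<1}) borel (quantile N) = N"
    using M N by (simp_all add: distr_quantile)
qed

theorem lemma2p2:
  fixes \<mu> :: "real measure" and n :: nat
  assumes "prob_space \<mu>"
    and "sets \<mu> = sets borel"
    and "compact (measure_support \<mu>)"
    and "finite (components (measure_support \<mu>))"
    and "card (components (measure_support \<mu>)) = n"
    and "\<epsilon> > 0"
  shows "\<exists>x y. x \<in> Linfty01 \<and> y \<in> Linfty01
      \<and> esssup (lebesgue_on {0<..<1}) (\<lambda>t. ereal \<bar>x t - y t\<bar>) < ereal \<epsilon>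
      \<and> distr (lebesgue_on {0<..<1}) borel x = \<mu>
      \<and> (\<exists>(a::nat \<Rightarrow> real) (b::nat \<Rightarrow> real) (\<rho>::real \<Rightarrow> real) (c::nat \<Rightarrow> real) (C::nat \<Rightarrow> real).
            (\<forall>j<n. a j < b j)
          \<and> (\<forall>i<n. \<forall>j<n. i \<noteq> j \<longrightarrow> {a i..b i} \<inter> {a j..b j} = {})
          \<and> emeasure (distr (lebesgue_on {0<..<1}) borel y)
              (UNIV - (\<Union>j<n. {a j..b j})) = 0
          \<and> distributed (lebesgue_on {0<..<1}) lborel y (\<lambda>t. ennreal (\<rho> t))
          \<and> (\<forall>j<n. c j > 0 \<and> C j > 0 \<and>
               (\<forall>t\<in>{a j..b j}.
                  c j * sqrt ((t - a j) * (b j - t)) \<le> \<rho> t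
                \<and> \<rho> t \<le> C j * sqrt ((t - a j) * (b j - t)))))"
proof -
  obtain a b \<rho> where ab: "\<forall>j<n. a j < b j" "\<forall>i<n. \<forall>j<n. i \<noteq> j \<longrightarrow> {a i..b i} \<inter> {a j..b j} = {}"
    and comparable: "\<forall>j<n. sqrt_comparable \<rho> (a j) (b j)"
    and outside: "emeasure (density lborel \<rho>) (UNIV - (\<Union>j<n. {a j..b j})) = 0"
    and [measurable]: "\<rho> \<in> borel_measurable borel"
    and \<nu>: "real_distribution (density lborel \<rho>)"
    and close: "levy_close \<mu> (density lborel \<rho>) (\<epsilon> / 2)"
    using exists_levy_close_density_enumerated[OF assms(1-5) half_gt_zero[OF assms(6)]] by blast
  have \<mu>: "real_distribution \<mu>"
    using assms(1,2) by (simp add: real_distribution_def real_distribution_axioms_def)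
  note coupling = quantile_coupling[OF \<mu> \<nu> close compact_imp_bounded[OF assms(3)]]
  obtain c C where "\<forall>j<n. 0 < c j \<and> 0 < C j \<and> (\<forall>t\<in>{a j..b j}.
      c j * sqrt ((t - a j) * (b j - t)) \<le> \<rho> t \<and> \<rho> t \<le> C j * sqrt ((t - a j) * (b j - t)))"
    using comparable unfolding sqrt_comparable_def by metis
  moreover have
    "distributed (lebesgue_on {0<..<1}) lborel (quantile (density lborel \<rho>)) (\<lambda>t. ennreal (\<rho> t))"
    using coupling(5) quantile_measurable[OF \<nu>]
    by (simp add: distributed_def distr_cong[OF refl sets_lborel[symmetric]])
  moreover have "emeasure (distr (lebesgue_on {0<..<1}) borel (quantile (density lborel \<rho>)))
      (UNIV - (\<Union>j<n. {a j..b j})) = 0"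
    using outside coupling(5) by simp
  moreover have
    "esssup (lebesgue_on {0<..<1}) (\<lambda>t. ereal \<bar>quantile \<mu> t - quantile (density lborel \<rho>) t\<bar>)
      < ereal \<epsilon>"
    using coupling(3) assms(6) by (simp add: order.strict_trans1)
  ultimately show ?thesis
    using coupling(1,2,4) ab by blast
qed

end
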